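(* Let $p:X_2\to X_1$, $q:Y_2\to Y_1$, $s:W_2\to W_1$, $f:X_1\to Y_1$, $g:Y_1\to W_1$, $h:X_2\to Y_2$, $k:Y_2\to W_2$ be equivariant maps with $f\circ p=q\circ h$ and $g\circ q=s\circ k$, such that both squares (square (1): $p,f,h,q$; square (2): $q,g,k,s$) are safe squares, the pair $(f,g)$ is forward-safe and the pair $(h,k)$ is backward-safe. Then the outer square ($p$, $g\circ f$, $k\circ h$, $s$) is a safe square.
   Context: Nominal sets over a countably infinite set $\mathcal V$ of names. For an equivariant $f:X\to Y$: $u$ is $f$-safe if $|\mathsf{supp}(u)|=\max\{|\mathsf{supp}(v)|:v\in f^{-1}(f(u))\}$ (maximum existing); $\mathsf{bv}_f(u)=\mathsf{supp}(u)\setminus\mathsf{supp}(f(u))$; $f$ is safe if every element of $Y$ has an $f$-safe preimage. A commuting square $a:Z\to X$, $f:X\to W$, $b:Z\to Y$, $c:Y\to W$ ($f\circ a=c\circ b$) is a safe square if for every $f$-safe $u\in X$ and $v\in Y$ with $f(u)=c(v)$ and $\mathsf{bv}_f(u)\cap\mathsf{supp}(v)=\emptyset$ there is a $b$-safe $z\in Z$ with $a(z)=u$, $b(z)=v$. For safe maps $f:X\to Y$, $g:Y\to W$: the pair $(f,g)$ is forward-safe if for every $(g\circ f)$-safe $u$, $f(u)$ is $g$-safe; it is backward-safe if every $f$-safe $u$ with $f(u)$ $g$-safe is $(g\circ f)$-safe. *)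

theory Defs
  imports Main
begin

text \<open>Names: the countably infinite set of natural numbers.\<close>

definition fperm :: "(nat \<Rightarrow> nat) \<Rightarrow> bool" where
  "fperm \<pi> \<longleftrightarrow> bij \<pi> \<and> finite {a. \<pi> a \<noteq> a}"

definition supports :: "((nat \<Rightarrow> nat) \<Rightarrow> 'a \<Rightarrow> 'a) \<Rightarrow> nat set \<Rightarrow> 'a \<Rightarrow> bool" where
  "supports act A x \<longleftrightarrow> (\<forall>\<pi>. fperm \<pi> \<and> (\<forall>a\<in>A. \<pi> a = a) \<longrightarrow> act \<pi> x = x)"

definition nominal_set :: "((nat \<Rightarrow> nat) \<Rightarrow> 'a \<Rightarrow> 'a) \<Rightarrow> bool" where
  "nominal_set act \<longleftrightarrow>
     (\<forall>x. act id x = x) \<and>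
     (\<forall>\<pi> \<sigma> x. fperm \<pi> \<and> fperm \<sigma> \<longrightarrow> act (\<pi> \<circ> \<sigma>) x = act \<pi> (act \<sigma> x)) \<and>
     (\<forall>x. \<exists>A. finite A \<and> supports act A x)"

definition supp :: "((nat \<Rightarrow> nat) \<Rightarrow> 'a \<Rightarrow> 'a) \<Rightarrow> 'a \<Rightarrow> nat set" where
  "supp act x = \<Inter>{A. finite A \<and> supports act A x}"

definition equivariant ::
  "((nat \<Rightarrow> nat) \<Rightarrow> 'a \<Rightarrow> 'a) \<Rightarrow> ((nat \<Rightarrow> nat) \<Rightarrow> 'b \<Rightarrow> 'b) \<Rightarrow> ('a \<Rightarrow> 'b) \<Rightarrow> bool" where
  "equivariant actX actY f \<longleftrightarrow> (\<forall>\<pi> x. fperm \<pi> \<longrightarrow> f (actX \<pi> x) = actY \<pi> (f x))"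

definition safe_elem :: "((nat \<Rightarrow> nat) \<Rightarrow> 'a \<Rightarrow> 'a) \<Rightarrow> ('a \<Rightarrow> 'b) \<Rightarrow> 'a \<Rightarrow> bool" where
  "safe_elem actX f u \<longleftrightarrow> (\<forall>v. f v = f u \<longrightarrow> card (supp actX v) \<le> card (supp actX u))"

definition bv ::
  "((nat \<Rightarrow> nat) \<Rightarrow> 'a \<Rightarrow> 'a) \<Rightarrow> ((nat \<Rightarrow> nat) \<Rightarrow> 'b \<Rightarrow> 'b) \<Rightarrow> ('a \<Rightarrow> 'b) \<Rightarrow> 'a \<Rightarrow> nat set" where
  "bv actX actY f u = supp actX u - supp actY (f u)"

definition safe_map :: "((nat \<Rightarrow> nat) \<Rightarrow> 'a \<Rightarrow> 'a) \<Rightarrow> ('a \<Rightarrow> 'b) \<Rightarrow> bool" where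
  "safe_map actX f \<longleftrightarrow> (\<forall>y. \<exists>u. f u = y \<and> safe_elem actX f u)"

definition safe_square ::
  "((nat \<Rightarrow> nat) \<Rightarrow> 'z \<Rightarrow> 'z) \<Rightarrow> ((nat \<Rightarrow> nat) \<Rightarrow> 'x \<Rightarrow> 'x) \<Rightarrow>
   ((nat \<Rightarrow> nat) \<Rightarrow> 'y \<Rightarrow> 'y) \<Rightarrow> ((nat \<Rightarrow> nat) \<Rightarrow> 'w \<Rightarrow> 'w) \<Rightarrow>
   ('z \<Rightarrow> 'x) \<Rightarrow> ('x \<Rightarrow> 'w) \<Rightarrow> ('z \<Rightarrow> 'y) \<Rightarrow> ('y \<Rightarrow> 'w) \<Rightarrow> bool" where
  "safe_square actZ actX actY actW a f b c \<longleftrightarrow>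
     (\<forall>u v. safe_elem actX f u \<and> f u = c v \<and> bv actX actW f u \<inter> supp actY v = {} \<longrightarrow>
        (\<exists>z. safe_elem actZ b z \<and> a z = u \<and> b z = v))"

text \<open>Forward/backward safety of a pair of safe maps f : X -> Y, g : Y -> W
  (the notion is only defined for safe maps, so safety of f and g is part of it).\<close>
definition forward_safe ::
  "((nat \<Rightarrow> nat) \<Rightarrow> 'x \<Rightarrow> 'x) \<Rightarrow> ((nat \<Rightarrow> nat) \<Rightarrow> 'y \<Rightarrow> 'y) \<Rightarrow> ('x \<Rightarrow> 'y) \<Rightarrow> ('y \<Rightarrow> 'w) \<Rightarrow> bool" where
  "forward_safe actX actY f g \<longleftrightarrow> safe_map actX f \<and> safe_map actY g \<and>
     (\<forall>u. safe_elem actX (g \<circ> f) u \<longrightarrow> safe_elem actY g (f u))"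

definition backward_safe ::
  "((nat \<Rightarrow> nat) \<Rightarrow> 'x \<Rightarrow> 'x) \<Rightarrow> ((nat \<Rightarrow> nat) \<Rightarrow> 'y \<Rightarrow> 'y) \<Rightarrow> ('x \<Rightarrow> 'y) \<Rightarrow> ('y \<Rightarrow> 'w) \<Rightarrow> bool" where
  "backward_safe actX actY f g \<longleftrightarrow> safe_map actX f \<and> safe_map actY g \<and>
     (\<forall>u. safe_elem actX f u \<and> safe_elem actY g (f u) \<longrightarrow> safe_elem actX (g \<circ> f) u)"

end

theory Submission
  imports Defs
begin

text \<open>Take the (g \<circ> f)-safe u and v with g (f u) = s v. Forward safety makes f u g-safe, so
  square (2) yields a k-safe y over (f u, v). The names bound by f at u are fresh for f u and v,
  so by transposing them one at a time with new names we may assume y avoids them; this keeps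
  q y, k y and the size of the support, hence k-safety. Square (1) now yields an h-safe z over
  (u, y), and backward safety of (h, k) makes z (k \<circ> h)-safe.\<close>

definition swap :: "nat \<Rightarrow> nat \<Rightarrow> nat \<Rightarrow> nat" where
  "swap b c = id(b := c, c := b)"

lemma swap_swap [simp]: "swap b c (swap b c x) = x"
  by (simp add: swap_def)

lemma inj_on_swap: "inj_on (swap b c) A"
  by (metis inj_onI swap_swap)

lemma swap_comp_swap: "swap b c \<circ> swap b c = id"
  by (simp add: fun_eq_iff)

lemma fperm_swap: "fperm (swap a b)"
proof -
  have "{c. swap a b c \<noteq> c} \<subseteq> {a, b}"
    by (auto simp: swap_def)
  moreover have "bij (swap a b)"
    using o_bij swap_comp_swap by blast
  ultimately show ?thesis
    unfolding fperm_def by (auto intro: finite_subset)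
qed

lemma fperm_comp: "fperm \<pi> \<Longrightarrow> fperm \<sigma> \<Longrightarrow> fperm (\<pi> \<circ> \<sigma>)"
  unfolding fperm_def
  by (auto intro: bij_comp finite_subset[of _ "{a. \<pi> a \<noteq> a} \<union> {a. \<sigma> a \<noteq> a}"])

lemma finite_supp:
  assumes "nominal_set act"
  shows "finite (supp act x)"
proof -
  obtain A where "finite A" "supports act A x"
    using assms unfolding nominal_set_def by blast
  then have "supp act x \<subseteq> A"
    unfolding supp_def by blast
  with \<open>finite A\<close> show ?thesis
    using finite_subset by blast
qed

lemma supp_equivariant_subset:
  assumes "equivariant actX actY F"
  shows "supp actY (F x) \<subseteq> supp actX x"
proof -
  have "supports actY A (F x)" if "supports actX A x" for A
    unfolding supports_def
  proof (intro allI impI)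
    fix \<pi> assume "fperm \<pi> \<and> (\<forall>a\<in>A. \<pi> a = a)"
    then show "actY \<pi> (F x) = F x"
      using that assms unfolding supports_def equivariant_def by metis
  qed
  then show ?thesis
    unfolding supp_def by blast
qed

lemma swap_fresh_fixes:
  assumes "b \<notin> supp act x"
  obtains A where "finite A" "\<And>c. c \<notin> A \<Longrightarrow> act (swap b c) x = x"
proof -
  obtain A where A: "finite A" "supports act A x" "b \<notin> A"
    using assms unfolding supp_def by blast
  have "act (swap b c) x = x" if "c \<notin> A" for c
  proof -
    have "\<forall>a\<in>A. swap b c a = a"
      using that A(3) by (auto simp: swap_def)
    then show ?thesis
      using A(2) fperm_swap unfolding supports_def by blast
  qed
  with A(1) show ?thesis using that by blast
qed

lemma supports_act_swap:
  assumes "nominal_set act" "supports act A y"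
  shows "supports act (swap b c ` A) (act (swap b c) y)"
  unfolding supports_def
proof (intro allI impI, elim conjE)
  let ?t = "swap b c"
  fix \<pi> assume \<pi>: "fperm \<pi>" and fixed: "\<forall>a\<in>?t ` A. \<pi> a = a"
  have fperm_conj: "fperm (?t \<circ> \<pi> \<circ> ?t)"
    by (intro fperm_comp fperm_swap \<pi>)
  have "act (?t \<circ> \<pi> \<circ> ?t) y = y"
    using assms(2) fperm_conj fixed unfolding supports_def by auto
  moreover have "?t \<circ> (?t \<circ> \<pi> \<circ> ?t) = \<pi> \<circ> ?t"
    by (simp add: fun_eq_iff)
  ultimately show "act \<pi> (act ?t y) = act ?t y"
    using assms(1) \<pi> fperm_conj fperm_swap unfolding nominal_set_def by metis
qed

lemma supp_act_swap_subset:
  assumes "nominal_set act"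
  shows "supp act (act (swap b c) y) \<subseteq> swap b c ` supp act y"
proof
  fix x assume x: "x \<in> supp act (act (swap b c) y)"
  have "swap b c x \<in> A" if "finite A" "supports act A y" for A
  proof -
    have "x \<in> swap b c ` A"
      using x supports_act_swap[OF assms that(2)] that(1) unfolding supp_def by blast
    then show ?thesis
      by auto
  qed
  then have "swap b c x \<in> supp act y"
    unfolding supp_def by blast
  then show "x \<in> swap b c ` supp act y"
    by (metis image_eqI swap_swap)
qed

lemma supp_act_swap:
  assumes "nominal_set act"
  shows "supp act (act (swap b c) y) = swap b c ` supp act y"
proof
  have "act (swap b c) (act (swap b c) y) = y"
    using assms fperm_swap unfolding nominal_set_def
    by (metis swap_comp_swap)
  then have "supp act y \<subseteq> swap b c ` supp act (act (swap b c) y)"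
    using supp_act_swap_subset[OF assms, of b c "act (swap b c) y"] by simp
  then show "swap b c ` supp act y \<subseteq> supp act (act (swap b c) y)"
    by (auto simp: image_comp)
qed (fact supp_act_swap_subset[OF assms])

lemma fresh_in_fibre:
  assumes "nominal_set actY" "equivariant actY actA q" "equivariant actY actB k"
    and "finite D" "D \<inter> supp actA (q y0) = {}" "D \<inter> supp actB (k y0) = {}"
  shows "\<exists>y. q y = q y0 \<and> k y = k y0 \<and> card (supp actY y) = card (supp actY y0)
    \<and> supp actY y \<inter> D = {}"
  using assms(5,6)
proof (induction "card (supp actY y0 \<inter> D)" arbitrary: y0 rule: less_induct)
  case less
  show ?case
  proof (cases "supp actY y0 \<inter> D = {}")
    case False
    then obtain b where b: "b \<in> supp actY y0" "b \<in> D" by blast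
    have "b \<notin> supp actA (q y0)" "b \<notin> supp actB (k y0)"
      using less.prems b(2) by blast+
    then obtain Aq Ak where "finite Aq" "finite Ak"
      and Aq: "\<And>c. c \<notin> Aq \<Longrightarrow> actA (swap b c) (q y0) = q y0"
      and Ak: "\<And>c. c \<notin> Ak \<Longrightarrow> actB (swap b c) (k y0) = k y0"
      by (metis swap_fresh_fixes)
    have "finite (Aq \<union> Ak \<union> supp actY y0 \<union> D)"
      using \<open>finite Aq\<close> \<open>finite Ak\<close> assms(4) finite_supp[OF assms(1)] by simp
    then obtain c where c: "c \<notin> Aq \<union> Ak \<union> supp actY y0 \<union> D"
      by (meson ex_new_if_finite infinite_UNIV_nat)
    define y1 where "y1 = actY (swap b c) y0"
    have "q y1 = actA (swap b c) (q y0)" "k y1 = actB (swap b c) (k y0)"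
      using assms(2,3) fperm_swap unfolding equivariant_def y1_def by blast+
    then have q: "q y1 = q y0" and k: "k y1 = k y0"
      using Aq Ak c by simp_all
    have supp_y1: "supp actY y1 = swap b c ` supp actY y0"
      unfolding y1_def by (rule supp_act_swap[OF assms(1)])
    then have card: "card (supp actY y1) = card (supp actY y0)"
      by (simp add: card_image inj_on_swap)
    have "supp actY y1 \<inter> D \<subseteq> supp actY y0 \<inter> D - {b}"
      using supp_y1 c by (auto simp: swap_def)
    then have "supp actY y1 \<inter> D \<subset> supp actY y0 \<inter> D"
      using b by blast
    then have "card (supp actY y1 \<inter> D) < card (supp actY y0 \<inter> D)"
      using assms(4) by (simp add: psubset_card_mono)
    moreover have "D \<inter> supp actA (q y1) = {}" "D \<inter> supp actB (k y1) = {}"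
      using less.prems q k by simp_all
    ultimately have "\<exists>y. q y = q y1 \<and> k y = k y1 \<and> card (supp actY y) = card (supp actY y1)
        \<and> supp actY y \<inter> D = {}"
      by (rule less.hyps)
    then show ?thesis
      using q k card by auto
  qed (use less.prems in blast)
qed

lemma safe_elem_of_safe_elem_comp: "safe_elem act (g \<circ> f) u \<Longrightarrow> safe_elem act f u"
  unfolding safe_elem_def by simp

theorem lemma5p40:
  fixes actX1 :: "(nat \<Rightarrow> nat) \<Rightarrow> 'x1 \<Rightarrow> 'x1" and actX2 :: "(nat \<Rightarrow> nat) \<Rightarrow> 'x2 \<Rightarrow> 'x2"
    and actY1 :: "(nat \<Rightarrow> nat) \<Rightarrow> 'y1 \<Rightarrow> 'y1" and actY2 :: "(nat \<Rightarrow> nat) \<Rightarrow> 'y2 \<Rightarrow> 'y2"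
    and actW1 :: "(nat \<Rightarrow> nat) \<Rightarrow> 'w1 \<Rightarrow> 'w1" and actW2 :: "(nat \<Rightarrow> nat) \<Rightarrow> 'w2 \<Rightarrow> 'w2"
    and p :: "'x2 \<Rightarrow> 'x1" and q :: "'y2 \<Rightarrow> 'y1" and s :: "'w2 \<Rightarrow> 'w1"
    and f :: "'x1 \<Rightarrow> 'y1" and g :: "'y1 \<Rightarrow> 'w1" and h :: "'x2 \<Rightarrow> 'y2" and k :: "'y2 \<Rightarrow> 'w2"
  assumes "nominal_set actX1" "nominal_set actX2" "nominal_set actY1" "nominal_set actY2"
    "nominal_set actW1" "nominal_set actW2"
    and "equivariant actX2 actX1 p" "equivariant actY2 actY1 q" "equivariant actW2 actW1 s"
    and "equivariant actX1 actY1 f" "equivariant actY1 actW1 g"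
    and "equivariant actX2 actY2 h" "equivariant actY2 actW2 k"
    and "f \<circ> p = q \<circ> h" "g \<circ> q = s \<circ> k"
    and "safe_square actX2 actX1 actY2 actY1 p f h q"
    and "safe_square actY2 actY1 actW2 actW1 q g k s"
    and "forward_safe actX1 actY1 f g"
    and "backward_safe actX2 actY2 h k"
  shows "safe_square actX2 actX1 actW2 actW1 p (g \<circ> f) (k \<circ> h) s"
  unfolding safe_square_def
proof (intro allI impI, elim conjE)
  fix u v
  assume u: "safe_elem actX1 (g \<circ> f) u" and uv: "(g \<circ> f) u = s v"
    and fresh: "bv actX1 actW1 (g \<circ> f) u \<inter> supp actW2 v = {}"
  have supp_fu: "supp actY1 (f u) \<subseteq> supp actX1 u"
    and supp_gfu: "supp actW1 (g (f u)) \<subseteq> supp actY1 (f u)"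
    using assms(10,11) by (auto dest: supp_equivariant_subset)
  have "safe_elem actY1 g (f u)"
    using assms(18) u unfolding forward_safe_def by blast
  moreover have "bv actY1 actW1 g (f u) \<inter> supp actW2 v = {}"
    using fresh supp_fu unfolding bv_def by auto
  moreover have "g (f u) = s v"
    using uv by simp
  ultimately obtain y0 where y0: "safe_elem actY2 k y0" "q y0 = f u" "k y0 = v"
    using assms(17) unfolding safe_square_def by blast
  have "bv actX1 actY1 f u \<inter> supp actW2 v = {}"
    using fresh supp_gfu unfolding bv_def by auto
  then obtain y where y: "q y = f u" "k y = v" "card (supp actY2 y) = card (supp actY2 y0)"
      "supp actY2 y \<inter> bv actX1 actY1 f u = {}"
    using fresh_in_fibre[OF assms(4,8,13), of "bv actX1 actY1 f u" y0]
      finite_supp[OF assms(1)] y0 unfolding bv_def by auto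
  have "safe_elem actY2 k y"
    using y0 y unfolding safe_elem_def by simp
  moreover obtain z where z: "safe_elem actX2 h z" "p z = u" "h z = y"
    using assms(16) safe_elem_of_safe_elem_comp[OF u] y(1,4)
    unfolding safe_square_def by (metis inf_commute)
  ultimately show "\<exists>z. safe_elem actX2 (k \<circ> h) z \<and> p z = u \<and> (k \<circ> h) z = v"
    using assms(19) y(2) unfolding backward_safe_def by auto
qed

end
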